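(* In the standing setting, for all $A',B'\in Q'$: there exist $A,B\in Q$ with $g(A)=A'$, $g(B)=B'$ and $B\subseteq A$ if and only if $B'\subseteq A'$. (That is, the relation on $Q'$ induced from inclusion on $Q$ via $g$ coincides with inclusion on $Q'$.)
   Context: Standing setting: $(P,\preceq)$ is a finite poset with a bottom and a top element; $f:P\to P'$ is a surjective map onto $P'=f(P)$; $f^{-1}(a')=\{a\in P: f(a)=a'\}$; the relation $\preceq'$ on $P'$ is defined by $b'\preceq' a'$ iff there exist $a\in f^{-1}(a')$, $b\in f^{-1}(b')$ with $b\preceq a$. Assume the three conditions: (D) for all $a',b'\in P'$ with $b'\preceq' a'$ and every $a\in f^{-1}(a')$ there is $b\in f^{-1}(b')$ with $b\preceq a$; (U) for all $a',b'\in P'$ with $b'\preceq' a'$ and every $b\in f^{-1}(b')$ there is $a\in f^{-1}(a')$ with $b\preceq a$; (S) for all $a,b,c\in P$, if $c\preceq b\preceq a$ and $f(c)=f(a)$ then $f(b)=f(a)$. (Then $(P',\preceq')$ is a poset.) A down-set of a poset is a subset $A$ such that $a\in A$ and $b\preceq a$ imply $b\in A$. $Q$ is the set of nonempty down-sets of $(P,\preceq)$ and $Q'$ the set of nonempty down-sets of $(P',\preceq')$, each ordered by inclusion. $g:2^P\to 2^{P'}$ is $g(A)=\{f(a):a\in A\}$. *)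

theory Defs
  imports Main
begin

definition is_poset :: "'a set \<Rightarrow> ('a \<Rightarrow> 'a \<Rightarrow> bool) \<Rightarrow> bool" where
  "is_poset P le \<longleftrightarrow>
     (\<forall>a\<in>P. le a a) \<and>
     (\<forall>a\<in>P. \<forall>b\<in>P. le a b \<and> le b a \<longrightarrow> a = b) \<and>
     (\<forall>a\<in>P. \<forall>b\<in>P. \<forall>c\<in>P. le a b \<and> le b c \<longrightarrow> le a c)"

definition has_bot_top :: "'a set \<Rightarrow> ('a \<Rightarrow> 'a \<Rightarrow> bool) \<Rightarrow> bool" where
  "has_bot_top P le \<longleftrightarrow> (\<exists>z\<in>P. \<forall>a\<in>P. le z a) \<and> (\<exists>t\<in>P. \<forall>a\<in>P. le a t)"

definition induced_rel :: "'a set \<Rightarrow> ('a \<Rightarrow> 'a \<Rightarrow> bool) \<Rightarrow> ('a \<Rightarrow> 'b) \<Rightarrow> 'b \<Rightarrow> 'b \<Rightarrow> bool" where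
  "induced_rel P le f b' a' \<longleftrightarrow> (\<exists>a\<in>P. \<exists>b\<in>P. f a = a' \<and> f b = b' \<and> le b a)"

definition cond_D :: "'a set \<Rightarrow> ('a \<Rightarrow> 'a \<Rightarrow> bool) \<Rightarrow> ('a \<Rightarrow> 'b) \<Rightarrow> bool" where
  "cond_D P le f \<longleftrightarrow> (\<forall>a'\<in>f ` P. \<forall>b'\<in>f ` P. induced_rel P le f b' a' \<longrightarrow>
       (\<forall>a\<in>P. f a = a' \<longrightarrow> (\<exists>b\<in>P. f b = b' \<and> le b a)))"

definition cond_U :: "'a set \<Rightarrow> ('a \<Rightarrow> 'a \<Rightarrow> bool) \<Rightarrow> ('a \<Rightarrow> 'b) \<Rightarrow> bool" where
  "cond_U P le f \<longleftrightarrow> (\<forall>a'\<in>f ` P. \<forall>b'\<in>f ` P. induced_rel P le f b' a' \<longrightarrow>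
       (\<forall>b\<in>P. f b = b' \<longrightarrow> (\<exists>a\<in>P. f a = a' \<and> le b a)))"

definition cond_S :: "'a set \<Rightarrow> ('a \<Rightarrow> 'a \<Rightarrow> bool) \<Rightarrow> ('a \<Rightarrow> 'b) \<Rightarrow> bool" where
  "cond_S P le f \<longleftrightarrow> (\<forall>a\<in>P. \<forall>b\<in>P. \<forall>c\<in>P. le c b \<and> le b a \<and> f c = f a \<longrightarrow> f b = f a)"

definition down_set :: "'a set \<Rightarrow> ('a \<Rightarrow> 'a \<Rightarrow> bool) \<Rightarrow> 'a set \<Rightarrow> bool" where
  "down_set S r A \<longleftrightarrow> A \<subseteq> S \<and> (\<forall>a\<in>A. \<forall>b\<in>S. r b a \<longrightarrow> b \<in> A)"

definition nonempty_down_sets :: "'a set \<Rightarrow> ('a \<Rightarrow> 'a \<Rightarrow> bool) \<Rightarrow> 'a set set" where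
  "nonempty_down_sets S r = {A. down_set S r A \<and> A \<noteq> {}}"

end

theory Submission
  imports Defs
begin

text \<open>Every down-set \<open>A'\<close> of \<open>P'\<close> is the image of its full preimage, which is a down-set of \<open>P\<close>;
  full preimages preserve inclusion. Hence inclusion on \<open>Q'\<close> lifts to \<open>Q\<close>, and the converse is
  monotonicity of images.\<close>

lemma down_set_preimage_induced_rel:
  assumes "down_set (f ` P) (induced_rel P le f) A'"
  shows "down_set P le {a \<in> P. f a \<in> A'}"
  unfolding down_set_def
proof (intro conjI ballI impI)
  fix a b assume a: "a \<in> {a \<in> P. f a \<in> A'}" and b: "b \<in> P" and "le b a"
  then have "induced_rel P le f (f b) (f a)" unfolding induced_rel_def by blast
  with assms a b show "b \<in> {a \<in> P. f a \<in> A'}" unfolding down_set_def by blast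
qed auto

lemma image_preimage_restrict:
  assumes "A' \<subseteq> f ` P"
  shows "f ` {a \<in> P. f a \<in> A'} = A'"
  using assms by blast

lemma preimage_in_nonempty_down_sets:
  assumes "A' \<in> nonempty_down_sets (f ` P) (induced_rel P le f)"
  shows "{a \<in> P. f a \<in> A'} \<in> nonempty_down_sets P le"
proof -
  have "down_set (f ` P) (induced_rel P le f) A'" "A' \<subseteq> f ` P" "A' \<noteq> {}"
    using assms unfolding nonempty_down_sets_def down_set_def by auto
  then have "down_set P le {a \<in> P. f a \<in> A'}" "f ` {a \<in> P. f a \<in> A'} = A'"
    using down_set_preimage_induced_rel image_preimage_restrict by blast+
  with \<open>A' \<noteq> {}\<close> show ?thesis
    unfolding nonempty_down_sets_def by auto
qed

theorem lemma5:
  fixes P :: "'a set" and le :: "'a \<Rightarrow> 'a \<Rightarrow> bool" and f :: "'a \<Rightarrow> 'b"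
  assumes "finite P"
    and "is_poset P le"
    and "has_bot_top P le"
    and "cond_D P le f"
    and "cond_U P le f"
    and "cond_S P le f"
    and "A' \<in> nonempty_down_sets (f ` P) (induced_rel P le f)"
    and "B' \<in> nonempty_down_sets (f ` P) (induced_rel P le f)"
  shows "(\<exists>A\<in>nonempty_down_sets P le. \<exists>B\<in>nonempty_down_sets P le.
            f ` A = A' \<and> f ` B = B' \<and> B \<subseteq> A) \<longleftrightarrow> B' \<subseteq> A'"
proof
  show "B' \<subseteq> A'" if "\<exists>A\<in>nonempty_down_sets P le. \<exists>B\<in>nonempty_down_sets P le.
            f ` A = A' \<and> f ` B = B' \<and> B \<subseteq> A"
    using that by blast
next
  assume "B' \<subseteq> A'"
  then have "{b \<in> P. f b \<in> B'} \<subseteq> {a \<in> P. f a \<in> A'}" by blast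
  moreover have "A' \<subseteq> f ` P" "B' \<subseteq> f ` P"
    using assms(7,8) unfolding nonempty_down_sets_def down_set_def by auto
  ultimately show "\<exists>A\<in>nonempty_down_sets P le. \<exists>B\<in>nonempty_down_sets P le.
            f ` A = A' \<and> f ` B = B' \<and> B \<subseteq> A"
    using preimage_in_nonempty_down_sets[OF assms(7)] preimage_in_nonempty_down_sets[OF assms(8)]
      image_preimage_restrict[of A' f P] image_preimage_restrict[of B' f P]
    by (intro bexI[of _ "{a \<in> P. f a \<in> A'}"] bexI[of _ "{b \<in> P. f b \<in> B'}"]) simp_all
qed

end
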